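(* Let $n\ge 2$, let $a_1,\dots,a_n$ be positive integers, let $b\ge 0$ be an integer, and let $M$ be the least common multiple of $a_1,\dots,a_n$ (more generally, $M$ may be taken to be any positive common multiple of $a_1,\dots,a_n$). Put $d_i=M/a_i$ for $i=1,\dots,n$, and $$f(t_1,\dots,t_n)=\frac{1}{M}\Bigl(b-\sum_{i=1}^n a_it_i\Bigr).$$ Let $P(b)$ be the number of $n$-tuples $(x_1,\dots,x_n)$ of non-negative integers with $\sum_{i=1}^n a_ix_i=b$. Then $$P(b)=\sum_{t_1=0}^{d_1-1}\sum_{t_2=0}^{d_2-1}\cdots\sum_{t_n=0}^{d_n-1} C\bigl(f(t_1,\dots,t_n)+1;\,n-1\bigr).$$
   Context: For a real number $k$ and a non-negative integer $l$, define $C(k;l)=\frac{1}{l!}\,k(k+1)\cdots(k+l-1)$ if $k$ is a positive integer (natural number), and $C(k;l)=0$ otherwise (in particular $C(k;l)=0$ whenever $k$ is not an integer or $k\le 0$). *)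

theory Defs
  imports Complex_Main "HOL-Library.FuncSet"
begin

definition Cpoch :: "real \<Rightarrow> nat \<Rightarrow> real" where
  "Cpoch k l = (if k \<in> \<nat> \<and> k > 0 then (\<Prod>j<l. (k + real j)) / fact l else 0)"

definition Pcount :: "nat \<Rightarrow> (nat \<Rightarrow> nat) \<Rightarrow> nat \<Rightarrow> nat" where
  "Pcount n a b = card {x \<in> {..<n} \<rightarrow>\<^sub>E (UNIV :: nat set). (\<Sum>i<n. a i * x i) = b}"

end

theory Submission
  imports Defs
begin

text \<open>Write each \<open>x\<^sub>i = t\<^sub>i + d\<^sub>i y\<^sub>i\<close> with residue \<open>0 \<le> t\<^sub>i < d\<^sub>i\<close>. Since \<open>a\<^sub>i d\<^sub>i = M\<close>, the
  equation becomes \<open>s + M \<Sum> y\<^sub>i = b\<close> with \<open>s = \<Sum> a\<^sub>i t\<^sub>i\<close>, so the solutions with residue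
  vector \<open>t\<close> correspond to the compositions of \<open>k = (b - s)/M\<close> into \<open>n\<close> non-negative parts.
  There are \<open>(k + n - 1 choose n - 1) = C(k + 1; n - 1)\<close> of them if \<open>k\<close> is a non-negative
  integer and none otherwise, where also \<open>C(k + 1; n - 1) = 0\<close>. Summing over the residue
  vectors gives the formula.\<close>

lemma Cpoch_of_nat_plus_one: "Cpoch (real k + 1) m = real ((k + m) choose k)"
proof -
  have "real k + 1 \<in> \<nat>"
    by (metis of_nat_Suc of_nat_in_Nats add.commute)
  moreover have "real ((k + m) choose k) = (\<Prod>j<m. real k + 1 + real j) / fact m"
    by (simp add: binomial_symmetric[of k "k + m", simplified] binomial_gbinomial
        gbinomial_pochhammer' pochhammer_prod lessThan_atLeast0)
  ultimately show ?thesis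
    by (simp add: Cpoch_def add_pos_nonneg)
qed

lemma Cpoch_quotient:
  assumes "M > 0"
  shows "Cpoch ((real b - real s) / real M + 1) m =
    (if s \<le> b \<and> M dvd b - s then real ((b - s) div M + m choose ((b - s) div M)) else 0)"
proof (cases "s \<le> b \<and> M dvd b - s")
  case True
  then obtain q where "b = s + M * q"
    by (metis dvd_def le_add_diff_inverse)
  then have "(real b - real s) / real M = real ((b - s) div M)"
    using assms by simp
  with True show ?thesis
    by (simp add: Cpoch_of_nat_plus_one)
next
  case False
  have "\<not> ((real b - real s) / real M + 1 \<in> \<nat> \<and> (real b - real s) / real M + 1 > 0)"
  proof
    assume "(real b - real s) / real M + 1 \<in> \<nat> \<and> (real b - real s) / real M + 1 > 0"
    then obtain r where "(real b - real s) / real M + 1 = real (Suc r)"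
      by (metis Nats_cases gr0_implies_Suc of_nat_0_less_iff)
    then have "real b = real (s + M * r)"
      using assms by (simp add: field_simps)
    then have "b = s + M * r"
      using of_nat_eq_iff by blast
    with False show False
      by simp
  qed
  with False show ?thesis
    by (simp add: Cpoch_def)
qed

lemma card_PiE_sum_eq:
  "card {y \<in> {..<n} \<rightarrow>\<^sub>E (UNIV :: nat set). (\<Sum>i<n. y i) = k} = (k + n - 1) choose k"
proof -
  have "bij_betw (\<lambda>l. \<lambda>i\<in>{..<n}. l ! i) {l. length l = n \<and> sum_list l = k}
          {y \<in> {..<n} \<rightarrow>\<^sub>E UNIV. (\<Sum>i<n. y i) = k}"
  proof (rule bij_betw_byWitness[where f' = "\<lambda>y. map y [0..<n]"])
    show "\<forall>l\<in>{l. length l = n \<and> sum_list l = k}. map (\<lambda>i\<in>{..<n}. l ! i) [0..<n] = l"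
      by (auto intro: nth_equalityI)
    show "\<forall>y\<in>{y \<in> {..<n} \<rightarrow>\<^sub>E UNIV. (\<Sum>i<n. y i) = k}. (\<lambda>i\<in>{..<n}. map y [0..<n] ! i) = y"
      by (auto simp: PiE_iff fun_eq_iff extensional_def)
    show "(\<lambda>l. \<lambda>i\<in>{..<n}. l ! i) ` {l. length l = n \<and> sum_list l = k}
            \<subseteq> {y \<in> {..<n} \<rightarrow>\<^sub>E UNIV. (\<Sum>i<n. y i) = k}"
      by (auto simp: sum_list_sum_nth lessThan_atLeast0)
    show "(\<lambda>y. map y [0..<n]) ` {y \<in> {..<n} \<rightarrow>\<^sub>E UNIV. (\<Sum>i<n. y i) = k}
            \<subseteq> {l. length l = n \<and> sum_list l = k}"
      by (auto simp: sum_list_sum_nth lessThan_atLeast0)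
  qed
  then show ?thesis
    using card_length_sum_list[of n k] bij_betw_same_card by fastforce
qed

lemma bij_betw_PiE_div_mod:
  assumes "t \<in> (\<Pi>\<^sub>E i\<in>I. {..<d i})"
  shows "bij_betw (\<lambda>y. \<lambda>i\<in>I. t i + d i * y i) (I \<rightarrow>\<^sub>E (UNIV :: nat set))
           {x \<in> I \<rightarrow>\<^sub>E UNIV. (\<lambda>i\<in>I. x i mod d i) = t}"
proof (rule bij_betw_byWitness[where f' = "\<lambda>x. \<lambda>i\<in>I. x i div d i"])
  have t: "t i < d i" if "i \<in> I" for i
    using assms that by auto
  have div: "(t i + d i * q) div d i = q" if "i \<in> I" for i q
    using t[OF that] by simp
  show "\<forall>y\<in>I \<rightarrow>\<^sub>E UNIV. (\<lambda>i\<in>I. (\<lambda>i\<in>I. t i + d i * y i) i div d i) = y"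
    using div by (auto simp: PiE_iff fun_eq_iff extensional_def)
  show "\<forall>x\<in>{x \<in> I \<rightarrow>\<^sub>E UNIV. (\<lambda>i\<in>I. x i mod d i) = t}.
          (\<lambda>i\<in>I. t i + d i * (\<lambda>i\<in>I. x i div d i) i) = x"
    by (auto simp: fun_eq_iff PiE_iff extensional_def) (metis mod_mult_div_eq)
  show "(\<lambda>y. \<lambda>i\<in>I. t i + d i * y i) ` (I \<rightarrow>\<^sub>E UNIV)
          \<subseteq> {x \<in> I \<rightarrow>\<^sub>E UNIV. (\<lambda>i\<in>I. x i mod d i) = t}"
    using t assms by (auto simp: fun_eq_iff PiE_iff extensional_def)
  show "(\<lambda>x. \<lambda>i\<in>I. x i div d i) ` {x \<in> I \<rightarrow>\<^sub>E UNIV. (\<lambda>i\<in>I. x i mod d i) = t} \<subseteq> I \<rightarrow>\<^sub>E UNIV"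
    by auto
qed

lemma card_PiE_affine_sum_eq:
  assumes "M > 0"
  shows "card {y \<in> {..<n} \<rightarrow>\<^sub>E (UNIV :: nat set). s + M * (\<Sum>i<n. y i) = b} =
    (if s \<le> b \<and> M dvd b - s then ((b - s) div M + n - 1) choose ((b - s) div M) else 0)"
proof (cases "s \<le> b \<and> M dvd b - s")
  case True
  then obtain q where "b = s + M * q"
    by (metis dvd_def le_add_diff_inverse)
  then have "s + M * m = b \<longleftrightarrow> m = (b - s) div M" for m
    using assms by simp
  with True show ?thesis
    by (simp add: card_PiE_sum_eq)
next
  case False
  then have "s + M * m \<noteq> b" for m
    by fastforce
  then have "{y \<in> {..<n} \<rightarrow>\<^sub>E UNIV. s + M * (\<Sum>i<n. y i) = b} = {}"
    by blast
  then show ?thesis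
    unfolding if_not_P[OF False] by (simp only: card.empty)
qed

lemma sum_weighted_div_mod:
  fixes a d t y :: "'i \<Rightarrow> nat"
  assumes "\<forall>i\<in>I. a i * d i = (M :: nat)"
  shows "(\<Sum>i\<in>I. a i * (t i + d i * y i)) = (\<Sum>i\<in>I. a i * t i) + M * (\<Sum>i\<in>I. y i)"
proof -
  have "(\<Sum>i\<in>I. a i * (t i + d i * y i)) = (\<Sum>i\<in>I. a i * t i + M * y i)"
    using assms by (intro sum.cong) (auto simp: algebra_simps simp flip: mult.assoc)
  then show ?thesis
    by (simp add: sum.distrib sum_distrib_left)
qed

lemma card_residue_fibre:
  fixes a d t :: "nat \<Rightarrow> nat"
  assumes ad: "\<forall>i<n. a i * d i = M" and "M > 0" and t: "t \<in> (\<Pi>\<^sub>E i\<in>{..<n}. {..<d i})"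
  defines "s \<equiv> \<Sum>i<n. a i * t i"
  shows "card {x \<in> {x \<in> {..<n} \<rightarrow>\<^sub>E UNIV. (\<Sum>i<n. a i * x i) = b}. (\<lambda>i\<in>{..<n}. x i mod d i) = t} =
    (if s \<le> b \<and> M dvd b - s then ((b - s) div M + n - 1) choose ((b - s) div M) else 0)"
    (is "card ?F = _")
proof -
  let ?f = "\<lambda>y. \<lambda>i\<in>{..<n}. t i + d i * y i"
  let ?Y = "{y \<in> {..<n} \<rightarrow>\<^sub>E UNIV. s + M * (\<Sum>i<n. y i) = b}"
  have "(\<Sum>i<n. a i * ?f y i) = s + M * (\<Sum>i<n. y i)" for y
  proof -
    have "(\<Sum>i<n. a i * ?f y i) = (\<Sum>i<n. a i * (t i + d i * y i))"
      by (rule sum.cong) simp_all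
    also have "\<dots> = s + M * (\<Sum>i<n. y i)"
      unfolding s_def by (rule sum_weighted_div_mod) (use ad in simp)
    finally show ?thesis .
  qed
  then have "bij_betw ?f ?Y {x \<in> {x \<in> {..<n} \<rightarrow>\<^sub>E UNIV. (\<lambda>i\<in>{..<n}. x i mod d i) = t}. (\<Sum>i<n. a i * x i) = b}"
    by (intro bij_betw_Collect[OF bij_betw_PiE_div_mod[OF t]]) simp
  also have "{x \<in> {x \<in> {..<n} \<rightarrow>\<^sub>E UNIV. (\<lambda>i\<in>{..<n}. x i mod d i) = t}. (\<Sum>i<n. a i * x i) = b} = ?F"
    by blast
  finally have "card ?F = card ?Y"
    by (simp add: bij_betw_same_card)
  with card_PiE_affine_sum_eq[OF \<open>M > 0\<close>] show ?thesis
    by simp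
qed

lemma finite_PiE_weighted_sum_eq:
  fixes a :: "nat \<Rightarrow> nat"
  assumes "\<forall>i<n. a i > 0"
  shows "finite {x \<in> {..<n} \<rightarrow>\<^sub>E (UNIV :: nat set). (\<Sum>i<n. a i * x i) = b}"
proof (rule finite_subset)
  show "{x \<in> {..<n} \<rightarrow>\<^sub>E UNIV. (\<Sum>i<n. a i * x i) = b} \<subseteq> {..<n} \<rightarrow>\<^sub>E {..b}"
  proof (intro subsetI PiE_I)
    fix x i
    assume x: "x \<in> {x \<in> {..<n} \<rightarrow>\<^sub>E UNIV. (\<Sum>i<n. a i * x i) = b}"
    then show "i \<notin> {..<n} \<Longrightarrow> x i = undefined"
      by auto
    assume "i \<in> {..<n}"
    then have "x i \<le> a i * x i"
      using assms by (simp add: Suc_le_eq)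
    also have "\<dots> \<le> (\<Sum>i<n. a i * x i)"
      using \<open>i \<in> {..<n}\<close> by (intro member_le_sum) simp_all
    finally show "x i \<in> {..b}"
      using x by simp
  qed
qed (simp add: finite_PiE)

theorem mainTheorem1:
  fixes n :: nat and a :: "nat \<Rightarrow> nat" and b :: nat and M :: nat
  assumes "n \<ge> 2"
    and "\<forall>i<n. a i > 0"
    and "M > 0"
    and "\<forall>i<n. a i dvd M"
  shows "real (Pcount n a b) =
    (\<Sum>t \<in> (\<Pi>\<^sub>E i\<in>{..<n}. {..<M div a i}).
       Cpoch ((real b - (\<Sum>i<n. real (a i) * real (t i))) / real M + 1) (n - 1))"
proof -
  define d where "d i = M div a i" for i
  let ?E = "{x \<in> {..<n} \<rightarrow>\<^sub>E UNIV. (\<Sum>i<n. a i * x i) = b}"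
  let ?T = "\<Pi>\<^sub>E i\<in>{..<n}. {..<d i}"
  have ad: "\<forall>i<n. a i * d i = M"
    using assms(2,4) by (simp add: d_def)
  then have "d i > 0" if "i < n" for i
    using assms(3) that by (metis mult_0_right neq0_conv)
  then have residues: "(\<lambda>x. \<lambda>i\<in>{..<n}. x i mod d i) ` ?E \<subseteq> ?T"
    by (auto simp: restrict_PiE_iff)
  have "real (Pcount n a b) = (\<Sum>t\<in>?T. real (card {x \<in> ?E. (\<lambda>i\<in>{..<n}. x i mod d i) = t}))"
    using sum_fun_comp[OF finite_PiE_weighted_sum_eq[OF assms(2)] _ residues, of "\<lambda>_. 1 :: real"]
    by (simp add: Pcount_def finite_PiE)
  also have "\<dots> = (\<Sum>t\<in>?T. Cpoch ((real b - real (\<Sum>i<n. a i * t i)) / real M + 1) (n - 1))"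
  proof (rule sum.cong[OF refl])
    fix t
    assume "t \<in> ?T"
    then show "real (card {x \<in> ?E. (\<lambda>i\<in>{..<n}. x i mod d i) = t}) =
        Cpoch ((real b - real (\<Sum>i<n. a i * t i)) / real M + 1) (n - 1)"
      using card_residue_fibre[OF ad assms(3), of t b]
        Cpoch_quotient[OF assms(3), of b "\<Sum>i<n. a i * t i" "n - 1"] assms(1)
      by simp
  qed
  finally show ?thesis
    by (simp add: d_def)
qed

end
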